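(* Let $G$ be a finite simple graph with edge weight function $w$ and vertex weight function $w_1$, let $\theta$ be a real number, and let $u$ be a $(\theta,w,w_1)$-special vertex of $G$. Then the degree of $u$ is at least two.
   Context: An edge weight function $w$ assigns a nonzero complex number to each edge; a vertex weight function $w_1$ assigns a real number (possibly $0$) to each vertex; subgraphs carry restricted weights; $G\setminus u$ deletes $u$ and its incident edges. For $A\subseteq E(G)$, $w(A)=\prod_{e\in A}w(e)$. $\mu_w(G,x)=\sum_{M}(-1)^{|M|}|w(M)|^2x^{n-2|M|}$ over all matchings $M$ (including empty). $\eta_{(w,w_1)}(G,x)=\sum_{S\subseteq V(G)}(-1)^{|V(G)\setminus S|}\big(\prod_{y\in V(G)\setminus S}w_1(y)\big)\mu_w(G[S],x)$ with $G[S]$ the induced subgraph; $\mu_w,\eta_{(w,w_1)}$ of the empty graph equal $1$. $\mathrm{mult}(\theta,H)$ is the multiplicity of $\theta$ as a root of $\eta_{(w,w_1)}(H,x)$ ($0$ if not a root). A vertex $v$ of $H$ is $(\theta,w,w_1)$-essential if $\mathrm{mult}(\theta,H\setminus v)=\mathrm{mult}(\theta,H)-1$; $v$ is $(\theta,w,w_1)$-special if it is not essential but is adjacent to some essential vertex. *)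

theory Defs
  imports Complex_Main "HOL-Computational_Algebra.Polynomial"
begin

definition simple_graph :: "'a set \<Rightarrow> 'a set set \<Rightarrow> bool" where
  "simple_graph V E \<longleftrightarrow> finite V \<and>
     (\<forall>e\<in>E. \<exists>x y. x \<noteq> y \<and> x \<in> V \<and> y \<in> V \<and> e = {x, y})"

definition matchings :: "'a set set \<Rightarrow> 'a set set set" where
  "matchings E = {M. M \<subseteq> E \<and> (\<forall>e\<in>M. \<forall>f\<in>M. e \<noteq> f \<longrightarrow> e \<inter> f = {})}"

definition induced_edges :: "'a set set \<Rightarrow> 'a set \<Rightarrow> 'a set set" where
  "induced_edges E S = {e\<in>E. e \<subseteq> S}"

definition mu_w :: "('a set \<Rightarrow> complex) \<Rightarrow> 'a set \<Rightarrow> 'a set set \<Rightarrow> real poly" where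
  "mu_w w V E = (\<Sum>M\<in>matchings E.
     monom ((-1) ^ card M * (\<Prod>e\<in>M. (cmod (w e))\<^sup>2)) (card V - 2 * card M))"

definition eta :: "('a set \<Rightarrow> complex) \<Rightarrow> ('a \<Rightarrow> real) \<Rightarrow> 'a set \<Rightarrow> 'a set set \<Rightarrow> real poly" where
  "eta w w1 V E = (\<Sum>S\<in>Pow V.
     smult ((-1) ^ card (V - S) * (\<Prod>y\<in>V - S. w1 y)) (mu_w w S (induced_edges E S)))"

definition mult :: "('a set \<Rightarrow> complex) \<Rightarrow> ('a \<Rightarrow> real) \<Rightarrow> real \<Rightarrow> 'a set \<Rightarrow> 'a set set \<Rightarrow> nat" where
  "mult w w1 \<theta> V E = order \<theta> (eta w w1 V E)"

definition del_vertices :: "'a set \<Rightarrow> 'a \<Rightarrow> 'a set" where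
  "del_vertices V u = V - {u}"

definition del_edges :: "'a set set \<Rightarrow> 'a \<Rightarrow> 'a set set" where
  "del_edges E u = {e\<in>E. u \<notin> e}"

definition essential :: "('a set \<Rightarrow> complex) \<Rightarrow> ('a \<Rightarrow> real) \<Rightarrow> real \<Rightarrow> 'a set \<Rightarrow> 'a set set \<Rightarrow> 'a \<Rightarrow> bool" where
  "essential w w1 \<theta> V E v \<longleftrightarrow> v \<in> V \<and>
     int (mult w w1 \<theta> (del_vertices V v) (del_edges E v)) = int (mult w w1 \<theta> V E) - 1"

definition special :: "('a set \<Rightarrow> complex) \<Rightarrow> ('a \<Rightarrow> real) \<Rightarrow> real \<Rightarrow> 'a set \<Rightarrow> 'a set set \<Rightarrow> 'a \<Rightarrow> bool" where
  "special w w1 \<theta> V E v \<longleftrightarrow> v \<in> V \<and> \<not> essential w w1 \<theta> V E v \<and>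
     (\<exists>x. {v, x} \<in> E \<and> essential w w1 \<theta> V E x)"

definition degree :: "'a set set \<Rightarrow> 'a \<Rightarrow> nat" where
  "degree E v = card {e\<in>E. v \<in> e}"

end

theory Submission
  imports Defs
begin

text \<open>
  Suppose the special vertex \<open>u\<close> had degree at most one. It is adjacent to an essential
  vertex \<open>v\<close>, which is then its only neighbour, so the vertex recurrence
  \<open>\<eta>(G) = (x - w\<^sub>1(u)) \<eta>(G-u) - \<Sum>\<^sub>v\<^sub>~\<^sub>u |w(uv)|\<^sup>2 \<eta>(G-u-v)\<close> gives
  \<open>\<eta>(G) = (x - w\<^sub>1(u)) \<eta>(G-u) - c \<eta>(G-u-v)\<close> and \<open>\<eta>(G-v) = (x - w\<^sub>1(u)) \<eta>(G-u-v)\<close>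
  with \<open>c > 0\<close>. If \<open>\<theta> \<noteq> w\<^sub>1(u)\<close>, comparing multiplicities of \<open>\<theta>\<close> in these identities
  shows that \<open>u\<close> is essential as well. If \<open>\<theta> = w\<^sub>1(u)\<close>, they force
  \<open>mult(\<theta>, G-u-v) = mult(\<theta>, G-u) + 1\<close> and \<open>mult(\<theta>, G) = mult(\<theta>, G-u) + 3\<close>, and then the
  cofactors of \<open>(x-\<theta>)\<^sup>k\<close> in \<open>\<eta>(G-u)\<close> and \<open>\<eta>(G-u-v)\<close> have the same sign at \<open>\<theta>\<close>.
  This contradicts the Christoffel--Darboux type inequality
  \<open>\<eta>(H-v) \<eta>(H)' - \<eta>(H) \<eta>(H-v)' \<ge> 0\<close>, which follows from the recurrence by induction.
\<close>

lemma smult_sum_right: "smult c (\<Sum>x\<in>A. f x) = (\<Sum>x\<in>A. smult c (f x))"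
  by (induction A rule: infinite_finite_induct) (simp_all add: smult_add_right)

lemma pderiv_sum: "pderiv (\<Sum>x\<in>A. f x) = (\<Sum>x\<in>A. pderiv (f x))"
  by (induction A rule: infinite_finite_induct) (simp_all add: pderiv_add)

lemma sum_Pow_insert:
  assumes "finite A" and "x \<notin> A"
  shows "(\<Sum>X\<in>Pow (insert x A). f X) = (\<Sum>X\<in>Pow A. f X) + (\<Sum>X\<in>Pow A. f (insert x X))"
proof -
  have "inj_on (insert x) (Pow A)"
    using assms(2) unfolding inj_on_def by auto
  then show ?thesis
    unfolding Pow_insert using assms
    by (subst sum.union_disjoint) (auto simp: sum.reindex)
qed

lemma sum_Pow_sum_members:
  fixes g :: "'a \<Rightarrow> 'a set \<Rightarrow> 'b::comm_monoid_add"
  assumes "finite S" and "N \<subseteq> S"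
  shows "(\<Sum>T\<in>Pow S. \<Sum>v\<in>{v\<in>N. v \<in> T}. g v T) = (\<Sum>v\<in>N. \<Sum>T\<in>Pow (S - {v}). g v (insert v T))"
proof -
  have "finite N"
    using assms finite_subset by blast
  then have "(\<Sum>T\<in>Pow S. \<Sum>v\<in>{v\<in>N. v \<in> T}. g v T) = (\<Sum>v\<in>N. \<Sum>T\<in>Pow S. if v \<in> T then g v T else 0)"
    by (simp add: sum.inter_filter sum.swap[of _ N])
  also have "\<dots> = (\<Sum>v\<in>N. \<Sum>T\<in>Pow (S - {v}). g v (insert v T))"
  proof (rule sum.cong[OF refl])
    fix v assume "v \<in> N"
    then have "v \<in> S"
      using assms(2) by blast
    have "(\<Sum>T\<in>Pow (insert v (S - {v})). if v \<in> T then g v T else 0)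
        = (\<Sum>T\<in>Pow (S - {v}). if v \<in> T then g v T else 0) + (\<Sum>T\<in>Pow (S - {v}). g v (insert v T))"
      using assms(1) by (subst sum_Pow_insert) auto
    then have "(\<Sum>T\<in>Pow S. if v \<in> T then g v T else 0)
        = (\<Sum>T\<in>Pow (S - {v}). if v \<in> T then g v T else 0) + (\<Sum>T\<in>Pow (S - {v}). g v (insert v T))"
      using \<open>v \<in> S\<close> by (simp add: insert_absorb)
    also have "(\<Sum>T\<in>Pow (S - {v}). if v \<in> T then g v T else 0) = 0"
      by (intro sum.neutral) auto
    finally show "(\<Sum>T\<in>Pow S. if v \<in> T then g v T else 0) = (\<Sum>T\<in>Pow (S - {v}). g v (insert v T))"
      by simp
  qed
  finally show ?thesis .
qed

section \<open>Matching polynomials of induced subgraphs\<close>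

abbreviation induced_mu :: "('a set \<Rightarrow> complex) \<Rightarrow> 'a set set \<Rightarrow> 'a set \<Rightarrow> real poly" where
  "induced_mu w E S \<equiv> mu_w w S (induced_edges E S)"

lemma doubleton_edge_neq:
  assumes "\<forall>e\<in>E. card e = 2" and "{u, v} \<in> E"
  shows "u \<noteq> v"
  using assms by force

lemma matchings_induced_edges_iff:
  "M \<in> matchings (induced_edges E T) \<longleftrightarrow> M \<in> matchings E \<and> \<Union>M \<subseteq> T"
  by (auto simp: matchings_def induced_edges_def)

lemma finite_matchings_induced_edges:
  assumes "finite T"
  shows "finite (matchings (induced_edges E T))"
proof (rule finite_subset)
  show "matchings (induced_edges E T) \<subseteq> Pow (Pow T)"
    by (auto simp: matchings_def induced_edges_def)
qed (use assms in simp)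

lemma card_matching_le:
  assumes edges: "\<forall>e\<in>E. card e = 2" and M: "M \<in> matchings E"
    and "\<Union>M \<subseteq> T" and "finite T"
  shows "2 * card M \<le> card T"
proof -
  have two: "\<forall>e\<in>M. card e = 2" and disj: "\<forall>e\<in>M. \<forall>f\<in>M. e \<noteq> f \<longrightarrow> e \<inter> f = {}"
    using M edges by (auto simp: matchings_def)
  have "finite (\<Union>M)"
    using assms(3,4) finite_subset by blast
  then have "card (\<Union>M) = sum card M"
    using disj by (intro card_Union_disjoint) (auto simp: pairwise_def disjnt_def intro: finite_subset)
  also have "\<dots> = 2 * card M"
    using two by simp
  finally show ?thesis
    using assms(3,4) card_mono by metis
qed

lemma insert_matching:
  assumes "M \<in> matchings E" and "e \<in> E" and "e \<inter> \<Union>M = {}"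
  shows "insert e M \<in> matchings E"
  using assms by (auto simp: matchings_def)

lemma matchings_avoiding_vertex:
  assumes "u \<notin> T"
  shows "{M \<in> matchings (induced_edges E (insert u T)). u \<notin> \<Union>M} = matchings (induced_edges E T)"
  using assms by (auto simp: matchings_induced_edges_iff) blast+

lemma matchings_covering_vertex:
  assumes edges: "\<forall>e\<in>E. card e = 2" and "u \<notin> T"
  shows "{M \<in> matchings (induced_edges E (insert u T)). u \<in> \<Union>M} =
    (\<Union>v\<in>{v\<in>T. {u, v} \<in> E}. insert {u, v} ` matchings (induced_edges E (T - {v})))"
proof (intro equalityI subsetI)
  fix M assume "M \<in> {M \<in> matchings (induced_edges E (insert u T)). u \<in> \<Union>M}"
  then obtain e where M: "M \<in> matchings E" "\<Union>M \<subseteq> insert u T" and e: "e \<in> M" "u \<in> e"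
    by (auto simp: matchings_induced_edges_iff)
  have "card e = 2"
    using e M edges by (auto simp: matchings_def)
  then obtain x y where "e = {x, y}" "x \<noteq> y"
    by (meson card_2_iff)
  then obtain v where v: "e = {u, v}" "v \<noteq> u"
    using e(2) by (metis insert_commute insertE singletonD)
  have "v \<in> T" and "{u, v} \<in> E"
    using M e v by (auto simp: matchings_def)
  moreover have "M - {e} \<in> matchings (induced_edges E (T - {v}))"
  proof -
    have "\<forall>f\<in>M - {e}. f \<inter> e = {}"
      using M(1) e(1) by (auto simp: matchings_def)
    then have "\<Union>(M - {e}) \<subseteq> T - {v}"
      using M(2) v(1) by blast
    moreover have "M - {e} \<in> matchings E"
      using M(1) by (auto simp: matchings_def)
    ultimately show ?thesis
      by (simp add: matchings_induced_edges_iff)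
  qed
  moreover have "M = insert {u, v} (M - {e})"
    using e v by auto
  ultimately show "M \<in> (\<Union>v\<in>{v\<in>T. {u, v} \<in> E}. insert {u, v} ` matchings (induced_edges E (T - {v})))"
    by blast
next
  fix M assume "M \<in> (\<Union>v\<in>{v\<in>T. {u, v} \<in> E}. insert {u, v} ` matchings (induced_edges E (T - {v})))"
  then obtain v M' where "v \<in> T" "{u, v} \<in> E" "M' \<in> matchings (induced_edges E (T - {v}))"
    and "M = insert {u, v} M'"
    by blast
  then show "M \<in> {M \<in> matchings (induced_edges E (insert u T)). u \<in> \<Union>M}"
    using assms(2) by (auto simp: matchings_induced_edges_iff intro: insert_matching)
qed

definition matching_term :: "('a set \<Rightarrow> complex) \<Rightarrow> 'a set \<Rightarrow> 'a set set \<Rightarrow> real poly" where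
  "matching_term w S M = monom ((-1) ^ card M * (\<Prod>e\<in>M. (cmod (w e))\<^sup>2)) (card S - 2 * card M)"

lemma mu_w_eq_sum_matching_term: "mu_w w S E = sum (matching_term w S) (matchings E)"
  by (simp add: mu_w_def matching_term_def)

lemma matching_term_insert_vertex:
  assumes "finite T" and "u \<notin> T" and "2 * card M \<le> card T"
  shows "matching_term w (insert u T) M = [:0, 1:] * matching_term w T M"
proof -
  have "card (insert u T) - 2 * card M = Suc (card T - 2 * card M)"
    using assms by simp
  then show ?thesis
    by (simp add: matching_term_def monom_Suc)
qed

lemma matching_term_insert_edge:
  assumes "finite T" and "u \<notin> T" and "v \<in> T" and "finite M" and "{u, v} \<notin> M"
    and "2 * card M \<le> card (T - {v})"
  shows "matching_term w (insert u T) (insert {u, v} M)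
    = - smult ((cmod (w {u, v}))\<^sup>2) (matching_term w (T - {v}) M)"
proof -
  have "card (insert u T) - 2 * card (insert {u, v} M) = card (T - {v}) - 2 * card M"
    using assms by (simp add: card_Diff_singleton)
  then show ?thesis
    using assms(4,5) by (simp add: matching_term_def smult_monom minus_monom)
qed

lemma sum_matchings_covering_vertex:
  assumes edges: "\<forall>e\<in>E. card e = 2" and fin: "finite T" and u: "u \<notin> T"
  shows "sum (matching_term w (insert u T)) {M \<in> matchings (induced_edges E (insert u T)). u \<in> \<Union>M}
    = - (\<Sum>v\<in>{v\<in>T. {u, v} \<in> E}. smult ((cmod (w {u, v}))\<^sup>2) (induced_mu w E (T - {v})))"
proof -
  define N where "N = {v\<in>T. {u, v} \<in> E}"
  define match_minus where "match_minus v = matchings (induced_edges E (T - {v}))" for v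
  have u_unmatched: "{u, x} \<notin> M" if "M \<in> match_minus v" for v x M
    using that u by (auto simp: match_minus_def matchings_induced_edges_iff)
  have "sum (matching_term w (insert u T)) {M \<in> matchings (induced_edges E (insert u T)). u \<in> \<Union>M}
      = (\<Sum>v\<in>N. sum (matching_term w (insert u T)) (insert {u, v} ` match_minus v))"
    unfolding matchings_covering_vertex[OF edges u] N_def[symmetric] match_minus_def[symmetric]
  proof (rule sum.UNION_disjoint)
    show "finite N" "\<forall>v\<in>N. finite (insert {u, v} ` match_minus v)"
      using fin by (auto simp: N_def match_minus_def finite_matchings_induced_edges)
    show "\<forall>i\<in>N. \<forall>j\<in>N. i \<noteq> j \<longrightarrow> insert {u, i} ` match_minus i \<inter> insert {u, j} ` match_minus j = {}"
    proof (intro ballI impI)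
      fix i j :: 'a assume "i \<noteq> j"
      have "insert {u, i} M1 \<noteq> insert {u, j} M2" if "M2 \<in> match_minus j" for M1 M2
      proof -
        have "{u, i} \<noteq> {u, j}"
          using \<open>i \<noteq> j\<close> by (auto simp: doubleton_eq_iff)
        then show ?thesis
          using u_unmatched[OF that] by blast
      qed
      then show "insert {u, i} ` match_minus i \<inter> insert {u, j} ` match_minus j = {}"
        by blast
    qed
  qed
  also have "\<dots> = (\<Sum>v\<in>N. - smult ((cmod (w {u, v}))\<^sup>2) (induced_mu w E (T - {v})))"
  proof (rule sum.cong[OF refl])
    fix v assume "v \<in> N"
    have "matching_term w (insert u T) (insert {u, v} M)
        = - smult ((cmod (w {u, v}))\<^sup>2) (matching_term w (T - {v}) M)" if "M \<in> match_minus v" for M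
    proof (rule matching_term_insert_edge)
      have "M \<subseteq> Pow T"
        using that by (auto simp: match_minus_def matchings_induced_edges_iff)
      then show "finite M"
        using fin by (meson finite_Pow_iff finite_subset)
      show "2 * card M \<le> card (T - {v})"
        using that edges fin by (auto simp: match_minus_def matchings_induced_edges_iff intro: card_matching_le)
    qed (use fin u \<open>v \<in> N\<close> u_unmatched[OF that] in \<open>auto simp: N_def\<close>)
    moreover have "inj_on (insert {u, v}) (match_minus v)"
      using u_unmatched by (intro inj_onI) (metis insert_ident)
    ultimately show "sum (matching_term w (insert u T)) (insert {u, v} ` match_minus v)
        = - smult ((cmod (w {u, v}))\<^sup>2) (induced_mu w E (T - {v}))"
      by (simp add: sum.reindex mu_w_eq_sum_matching_term match_minus_def sum_negf smult_sum_right)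
  qed
  finally show ?thesis
    by (simp add: N_def sum_negf)
qed

lemma mu_insert_vertex:
  assumes edges: "\<forall>e\<in>E. card e = 2" and fin: "finite T" and u: "u \<notin> T"
  shows "induced_mu w E (insert u T) = [:0, 1:] * induced_mu w E T
    - (\<Sum>v\<in>{v\<in>T. {u, v} \<in> E}. smult ((cmod (w {u, v}))\<^sup>2) (induced_mu w E (T - {v})))"
proof -
  define MT where "MT = matchings (induced_edges E (insert u T))"
  have "finite MT"
    using fin by (simp add: MT_def finite_matchings_induced_edges)
  have "MT = {M\<in>MT. u \<notin> \<Union>M} \<union> {M\<in>MT. u \<in> \<Union>M}"
    by blast
  then have "induced_mu w E (insert u T)
      = sum (matching_term w (insert u T)) {M\<in>MT. u \<notin> \<Union>M}
        + sum (matching_term w (insert u T)) {M\<in>MT. u \<in> \<Union>M}"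
    unfolding mu_w_eq_sum_matching_term MT_def[symmetric]
    by (metis (no_types, lifting) \<open>finite MT\<close> sum.union_disjoint disjoint_iff finite_Un mem_Collect_eq)
  also have "sum (matching_term w (insert u T)) {M\<in>MT. u \<notin> \<Union>M} = [:0, 1:] * induced_mu w E T"
  proof -
    have "matching_term w (insert u T) M = [:0, 1:] * matching_term w T M"
      if "M \<in> matchings (induced_edges E T)" for M
      using that edges fin u
      by (intro matching_term_insert_vertex) (auto simp: matchings_induced_edges_iff intro: card_matching_le)
    then show ?thesis
      unfolding MT_def matchings_avoiding_vertex[OF u] mu_w_eq_sum_matching_term
      by (simp add: sum_distrib_left)
  qed
  also have "sum (matching_term w (insert u T)) {M\<in>MT. u \<in> \<Union>M}
      = - (\<Sum>v\<in>{v\<in>T. {u, v} \<in> E}. smult ((cmod (w {u, v}))\<^sup>2) (induced_mu w E (T - {v})))"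
    unfolding MT_def by (rule sum_matchings_covering_vertex[OF edges fin u])
  finally show ?thesis
    by (simp only: diff_conv_add_uminus)
qed

section \<open>The vertex recurrence for \<open>\<eta>\<close>\<close>

definition vertex_weight :: "('a \<Rightarrow> real) \<Rightarrow> 'a set \<Rightarrow> real" where
  "vertex_weight w1 R = (-1) ^ card R * (\<Prod>y\<in>R. w1 y)"

lemma eta_eq_sum_vertex_weight:
  "eta w w1 X E = (\<Sum>T\<in>Pow X. smult (vertex_weight w1 (X - T)) (induced_mu w E T))"
  by (simp add: eta_def vertex_weight_def)

lemma eta_part_avoiding_vertex:
  assumes "finite S" and "u \<notin> S"
  shows "(\<Sum>T\<in>Pow S. smult (vertex_weight w1 (insert u S - T)) (induced_mu w E T))
    = smult (- w1 u) (eta w w1 S E)"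
proof -
  have "vertex_weight w1 (insert u S - T) = - w1 u * vertex_weight w1 (S - T)" if "T \<subseteq> S" for T
  proof -
    have "insert u S - T = insert u (S - T)"
      using that assms(2) by auto
    then show ?thesis
      using assms by (simp add: vertex_weight_def)
  qed
  then show ?thesis
    by (simp add: eta_eq_sum_vertex_weight smult_sum_right)
qed

lemma eta_part_containing_vertex:
  assumes edges: "\<forall>e\<in>E. card e = 2" and fin: "finite S" and u: "u \<notin> S"
  shows "(\<Sum>T\<in>Pow S. smult (vertex_weight w1 (S - T)) (induced_mu w E (insert u T)))
    = [:0, 1:] * eta w w1 S E
      - (\<Sum>v\<in>{v\<in>S. {u, v} \<in> E}. smult ((cmod (w {u, v}))\<^sup>2) (eta w w1 (S - {v}) E))"
proof -
  define N where "N = {v\<in>S. {u, v} \<in> E}"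
  define c where "c v = (cmod (w {u, v}))\<^sup>2" for v
  have "smult (vertex_weight w1 (S - T)) (induced_mu w E (insert u T))
      = [:0, 1:] * smult (vertex_weight w1 (S - T)) (induced_mu w E T)
        - (\<Sum>v\<in>{v\<in>N. v \<in> T}. smult (vertex_weight w1 (S - T) * c v) (induced_mu w E (T - {v})))"
    if T: "T \<subseteq> S" for T
  proof -
    have "{v\<in>T. {u, v} \<in> E} = {v\<in>N. v \<in> T}" and "finite T" and "u \<notin> T"
      using T fin u finite_subset by (auto simp: N_def)
    then show ?thesis
      by (simp add: mu_insert_vertex[OF edges] c_def smult_diff_right smult_sum_right)
  qed
  then have "(\<Sum>T\<in>Pow S. smult (vertex_weight w1 (S - T)) (induced_mu w E (insert u T)))
      = [:0, 1:] * eta w w1 S E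
        - (\<Sum>T\<in>Pow S. \<Sum>v\<in>{v\<in>N. v \<in> T}. smult (vertex_weight w1 (S - T) * c v) (induced_mu w E (T - {v})))"
    by (simp add: eta_eq_sum_vertex_weight sum_subtractf sum_distrib_left)
  also have "(\<Sum>T\<in>Pow S. \<Sum>v\<in>{v\<in>N. v \<in> T}. smult (vertex_weight w1 (S - T) * c v) (induced_mu w E (T - {v})))
      = (\<Sum>v\<in>N. smult (c v) (eta w w1 (S - {v}) E))"
  proof -
    have "smult (vertex_weight w1 (S - insert v T) * c v) (induced_mu w E (insert v T - {v}))
        = smult (c v) (smult (vertex_weight w1 (S - {v} - T)) (induced_mu w E T))" if "T \<subseteq> S - {v}" for v T
    proof -
      have "S - insert v T = S - {v} - T" and "insert v T - {v} = T"
        using that by auto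
      then show ?thesis
        by (simp add: mult.commute)
    qed
    moreover have "N \<subseteq> S"
      by (auto simp: N_def)
    ultimately show ?thesis
      using fin by (simp add: sum_Pow_sum_members eta_eq_sum_vertex_weight smult_sum_right)
  qed
  finally show ?thesis
    by (simp add: N_def c_def)
qed

lemma eta_insert_vertex:
  assumes edges: "\<forall>e\<in>E. card e = 2" and fin: "finite S" and u: "u \<notin> S"
  shows "eta w w1 (insert u S) E = [:- w1 u, 1:] * eta w w1 S E
    - (\<Sum>v\<in>{v\<in>S. {u, v} \<in> E}. smult ((cmod (w {u, v}))\<^sup>2) (eta w w1 (S - {v}) E))"
proof -
  have "insert u S - insert u T = S - T" for T
    using u by auto
  then have "eta w w1 (insert u S) E
      = (\<Sum>T\<in>Pow S. smult (vertex_weight w1 (insert u S - T)) (induced_mu w E T))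
        + (\<Sum>T\<in>Pow S. smult (vertex_weight w1 (S - T)) (induced_mu w E (insert u T)))"
    unfolding eta_eq_sum_vertex_weight[of _ _ "insert u S"] by (simp add: sum_Pow_insert[OF fin u])
  then show ?thesis
    by (simp add: eta_part_avoiding_vertex[OF fin u] eta_part_containing_vertex[OF edges fin u])
qed

lemma eta_empty:
  assumes "\<forall>e\<in>E. card e = 2"
  shows "eta w w1 {} E = 1"
proof -
  have "induced_edges E {} = {}"
    using assms by (force simp: induced_edges_def)
  moreover have "matchings ({} :: 'a set set) = {{}}"
    by (auto simp: matchings_def)
  ultimately show ?thesis
    by (simp add: eta_def mu_w_def)
qed

lemma eta_monic:
  assumes edges: "\<forall>e\<in>E. card e = 2" and "finite S"
  shows "Polynomial.degree (eta w w1 S E) \<le> card S \<and> coeff (eta w w1 S E) (card S) = 1"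
  using assms(2)
proof (induction S rule: finite_psubset_induct)
  case (psubset S)
  show ?case
  proof (cases "S = {}")
    case True
    then show ?thesis
      by (simp add: eta_empty[OF edges])
  next
    case False
    then obtain u S' where S: "S = insert u S'" "u \<notin> S'"
      by (metis Set.set_insert ex_in_conv)
    define n where "n = card S'"
    have "finite S'" and card_S: "card S = Suc n"
      using psubset.hyps S by (auto simp: n_def)
    define Sm where "Sm = (\<Sum>v\<in>{v\<in>S'. {u, v} \<in> E}. smult ((cmod (w {u, v}))\<^sup>2) (eta w w1 (S' - {v}) E))"
    define q where "q = eta w w1 S' E"
    have rec: "eta w w1 S E = [:- w1 u, 1:] * q - Sm"
      using eta_insert_vertex[OF edges \<open>finite S'\<close> S(2)] by (simp add: S(1) q_def Sm_def)
    have q: "Polynomial.degree q \<le> n" "coeff q n = 1"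
      using psubset.IH[of S'] S by (auto simp: q_def n_def)
    have "Polynomial.degree (eta w w1 (S' - {v}) E) < n" if "v \<in> S'" for v
    proof -
      have "S' - {v} \<subset> S"
        using S that by auto
      moreover have "card (S' - {v}) < n"
        using card_Diff1_less[OF \<open>finite S'\<close> that] by (simp add: n_def)
      ultimately show ?thesis
        using psubset.IH[of "S' - {v}"] by linarith
    qed
    then have "Polynomial.degree Sm \<le> n"
      unfolding Sm_def using \<open>finite S'\<close>
      by (intro degree_sum_le) (auto intro: order.trans[OF degree_smult_le] less_imp_le)
    moreover have "Polynomial.degree ([:- w1 u, 1:] * q) \<le> Suc n"
      using degree_mult_le[of "[:- w1 u, 1:]" q] q(1) by simp
    moreover have "coeff ([:- w1 u, 1:] * q) (Suc n) = 1"
      using q by (simp add: coeff_eq_0)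
    ultimately show ?thesis
      unfolding rec card_S by (simp add: coeff_eq_0 degree_diff_le)
  qed
qed

lemma eta_nonzero:
  assumes "\<forall>e\<in>E. card e = 2" and "finite S"
  shows "eta w w1 S E \<noteq> 0"
  using eta_monic[OF assms, of w w1] by auto

lemma wronskian_linear_recurrence:
  fixes q :: "'a::idom poly"
  assumes "p = L * q - (\<Sum>v\<in>N. smult (c v) (s v))" and "pderiv L = 1"
  shows "q * pderiv p - p * pderiv q = q * q + (\<Sum>v\<in>N. smult (c v) (s v * pderiv q - q * pderiv (s v)))"
  unfolding assms(1)
  by (simp add: assms(2) pderiv_diff pderiv_mult pderiv_sum pderiv_smult algebra_simps
      sum_distrib_left sum_distrib_right smult_diff_right sum_subtractf)

lemma eta_wronskian_nonneg:
  assumes edges: "\<forall>e\<in>E. card e = 2" and "finite S" and "u \<notin> S"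
  shows "poly (eta w w1 S E * pderiv (eta w w1 (insert u S) E)
    - eta w w1 (insert u S) E * pderiv (eta w w1 S E)) x \<ge> 0"
  using assms(2,3)
proof (induction S arbitrary: u rule: finite_psubset_induct)
  case (psubset S)
  define N where "N = {v\<in>S. {u, v} \<in> E}"
  define c where "c v = (cmod (w {u, v}))\<^sup>2" for v
  define s where "s v = eta w w1 (S - {v}) E" for v
  define q where "q = eta w w1 S E"
  have "eta w w1 (insert u S) E = [:- w1 u, 1:] * q - (\<Sum>v\<in>N. smult (c v) (s v))"
    using eta_insert_vertex[OF edges psubset.hyps psubset.prems] by (simp add: N_def c_def s_def q_def)
  then have "q * pderiv (eta w w1 (insert u S) E) - eta w w1 (insert u S) E * pderiv q
      = q * q + (\<Sum>v\<in>N. smult (c v) (s v * pderiv q - q * pderiv (s v)))"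
    by (rule wronskian_linear_recurrence) (simp add: pderiv_pCons)
  moreover have "poly (s v * pderiv q - q * pderiv (s v)) x \<ge> 0" if "v \<in> N" for v
  proof -
    have "insert v (S - {v}) = S"
      using that by (auto simp: N_def)
    then show ?thesis
      using psubset.IH[of "S - {v}" v] that by (auto simp: N_def s_def q_def)
  qed
  ultimately show ?case
    by (simp add: poly_sum q_def c_def sum_nonneg)
qed

section \<open>Multiplicities of roots\<close>

lemma order_diff_eq_min:
  fixes f g :: "'a::idom poly"
  assumes "order a f \<noteq> order a g" and "f \<noteq> 0" and "g \<noteq> 0"
  shows "order a (f - g) = min (order a f) (order a g)"
proof -
  define n where "n = min (order a f) (order a g)"
  have "f - g \<noteq> 0"
    using assms(1) by auto
  have "[:-a, 1:] ^ n dvd f" and "[:-a, 1:] ^ n dvd g"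
    by (simp_all add: order_divides n_def)
  then have "n \<le> order a (f - g)"
    using \<open>f - g \<noteq> 0\<close> by (metis dvd_diff order_divides)
  moreover have "\<not> Suc n \<le> order a (f - g)"
  proof
    assume "Suc n \<le> order a (f - g)"
    then have "[:-a, 1:] ^ Suc n dvd f - g"
      using order_divides by blast
    moreover have "Suc n \<le> order a f \<or> Suc n \<le> order a g"
      using assms(1) by (auto simp: n_def)
    then have "[:-a, 1:] ^ Suc n dvd f \<or> [:-a, 1:] ^ Suc n dvd g"
      using order_divides by blast
    ultimately have "[:-a, 1:] ^ Suc n dvd f \<and> [:-a, 1:] ^ Suc n dvd g"
      using dvd_diff[of "[:-a, 1:] ^ Suc n" f "f - g"] dvd_add[of "[:-a, 1:] ^ Suc n" "f - g" g] by auto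
    then have "Suc n \<le> order a f" and "Suc n \<le> order a g"
      using assms(2,3) order_divides by blast+
    then show False
      by (simp add: n_def)
  qed
  ultimately show ?thesis
    by (simp add: n_def)
qed

lemma poly_nonneg_punctured:
  fixes h :: "real poly"
  assumes "\<And>x. x \<noteq> t \<Longrightarrow> poly h x \<ge> 0"
  shows "poly h t \<ge> 0"
proof (rule tendsto_lowerbound)
  show "(poly h \<longlongrightarrow> poly h t) (at t)"
    using isCont_def poly_isCont by blast
  show "\<forall>\<^sub>F x in at t. 0 \<le> poly h x"
    using assms by (auto simp: eventually_at_filter)
qed simp

lemma wronskian_nonneg_cofactor_sign:
  fixes q s q1 s1 :: "real poly"
  assumes W: "\<And>x. poly (s * pderiv q - q * pderiv s) x \<ge> 0"
    and q: "q = [:-\<theta>, 1:] ^ k * q1" and s: "s = [:-\<theta>, 1:] ^ Suc k * s1"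
  shows "poly q1 \<theta> * poly s1 \<theta> \<le> 0"
proof -
  define y where "y = [:-\<theta>, 1:]"
  define h where "h = y * (s1 * pderiv q1 - q1 * pderiv s1) - q1 * s1"
  have "(y * Y * s1) * pderiv (Y * q1) - (Y * q1) * pderiv (y * Y * s1) = Y * Y * h"
    if "pderiv y = 1" for Y
    using that by (simp add: h_def pderiv_mult algebra_simps)
  then have "s * pderiv q - q * pderiv s = y ^ k * y ^ k * h"
    unfolding q s y_def by (simp add: pderiv_pCons mult.assoc)
  then have "poly (y ^ k) x * poly (y ^ k) x * poly h x \<ge> 0" for x
    using W[of x] by simp
  moreover have "poly (y ^ k) x * poly (y ^ k) x > 0" if "x \<noteq> \<theta>" for x
  proof -
    have "poly (y ^ k) x \<noteq> 0"
      using that by (simp add: y_def)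
    then show ?thesis
      by (metis not_real_square_gt_zero)
  qed
  ultimately have "poly h x \<ge> 0" if "x \<noteq> \<theta>" for x
    using that by (meson zero_le_mult_iff not_less)
  then have "poly h \<theta> \<ge> 0"
    by (rule poly_nonneg_punctured)
  then show ?thesis
    by (simp add: h_def y_def)
qed

lemma pendant_order_off_root:
  fixes q s :: "real poly"
  assumes p: "p = [:-a, 1:] * q - smult c s" and r: "r = [:-a, 1:] * s"
    and "c \<noteq> 0" and "q \<noteq> 0" and "s \<noteq> 0" and "a \<noteq> \<theta>"
    and r_order: "order \<theta> r + 1 = order \<theta> p"
  shows "order \<theta> q + 1 = order \<theta> p"
proof -
  have L: "order \<theta> [:-a, 1:] = 0"
    using \<open>a \<noteq> \<theta>\<close> by (intro order_0I) simp
  have "order \<theta> ([:-a, 1:] * f) = order \<theta> f" if "f \<noteq> 0" for f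
    using order_mult[of "[:-a, 1:]" f \<theta>] that L by (simp del: mult_pCons_left)
  then have "order \<theta> r = order \<theta> s" and "order \<theta> ([:-a, 1:] * q) = order \<theta> q"
    using \<open>q \<noteq> 0\<close> \<open>s \<noteq> 0\<close> by (simp_all only: r)
  moreover have "order \<theta> (smult c s) = order \<theta> s"
    using \<open>c \<noteq> 0\<close> by (simp add: order_smult)
  moreover have "order \<theta> q = order \<theta> s"
  proof (rule ccontr)
    assume "order \<theta> q \<noteq> order \<theta> s"
    then have "order \<theta> p = min (order \<theta> q) (order \<theta> s)"
      using calculation \<open>c \<noteq> 0\<close> \<open>q \<noteq> 0\<close> \<open>s \<noteq> 0\<close> unfolding p
      by (subst order_diff_eq_min) (auto simp del: mult_pCons_left)
    then show False
      using r_order \<open>order \<theta> r = order \<theta> s\<close> by linarith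
  qed
  ultimately show ?thesis
    using r_order by simp
qed

lemma pendant_orders_at_root:
  fixes q s :: "real poly"
  assumes p: "p = [:-\<theta>, 1:] * q - smult c s" and r: "r = [:-\<theta>, 1:] * s"
    and "c \<noteq> 0" and "q \<noteq> 0" and "s \<noteq> 0"
    and r_order: "order \<theta> r + 1 = order \<theta> p"
  shows "order \<theta> s = order \<theta> q + 1" and "order \<theta> p = order \<theta> q + 3"
proof -
  define y where "y = [:-\<theta>, 1:]"
  have y: "order \<theta> y = 1" "y \<noteq> 0"
    using order_power_n_n[of \<theta> 1] by (simp_all add: y_def)
  have "order \<theta> (y * f) = order \<theta> f + 1" if "f \<noteq> 0" for f
    using order_mult[of y f \<theta>] that y by simp
  then have "order \<theta> r = order \<theta> s + 1" and "order \<theta> (y * q) = order \<theta> q + 1"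
    using \<open>q \<noteq> 0\<close> \<open>s \<noteq> 0\<close> by (simp_all only: r flip: y_def)
  moreover have "order \<theta> (smult c s) = order \<theta> s"
    using \<open>c \<noteq> 0\<close> by (simp add: order_smult)
  moreover show s_order: "order \<theta> s = order \<theta> q + 1"
  proof (rule ccontr)
    assume "order \<theta> s \<noteq> order \<theta> q + 1"
    then have "order \<theta> p = min (order \<theta> q + 1) (order \<theta> s)"
      using calculation \<open>c \<noteq> 0\<close> \<open>q \<noteq> 0\<close> \<open>s \<noteq> 0\<close> y(2) unfolding p y_def[symmetric]
      by (subst order_diff_eq_min) auto
    then show False
      using r_order \<open>order \<theta> r = order \<theta> s + 1\<close> by linarith
  qed
  ultimately show "order \<theta> p = order \<theta> q + 3"
    using r_order by simp
qed

lemma pendant_order_at_root_impossible: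
  fixes q s :: "real poly"
  assumes p: "p = [:-\<theta>, 1:] * q - smult c s" and r: "r = [:-\<theta>, 1:] * s"
    and "c > 0" and "q \<noteq> 0" and "s \<noteq> 0"
    and W: "\<And>x. poly (s * pderiv q - q * pderiv s) x \<ge> 0"
    and r_order: "order \<theta> r + 1 = order \<theta> p"
  shows False
proof -
  define y where "y = [:-\<theta>, 1:]"
  define k where "k = order \<theta> q"
  have orders: "order \<theta> s = Suc k" "order \<theta> p = Suc (Suc (Suc k))"
    using pendant_orders_at_root[OF p r _ \<open>q \<noteq> 0\<close> \<open>s \<noteq> 0\<close> r_order] \<open>c > 0\<close> by (simp_all add: k_def)
  obtain q1 where q: "q = y ^ k * q1"
    using order_decomp[OF \<open>q \<noteq> 0\<close>] by (auto simp: y_def k_def)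
  obtain s1 where s: "s = y ^ Suc k * s1" and "\<not> y dvd s1"
    using order_decomp[OF \<open>s \<noteq> 0\<close>, of \<theta>] orders(1) by (auto simp: y_def)
  have "poly s1 \<theta> \<noteq> 0"
    using \<open>\<not> y dvd s1\<close> by (simp add: y_def poly_eq_0_iff_dvd)
  have "p = y * q - smult c s"
    by (simp add: p y_def)
  also have "\<dots> = y ^ Suc k * (q1 - smult c s1)"
    unfolding q s by (simp add: algebra_simps)
  finally have "p = y ^ Suc k * (q1 - smult c s1)" .
  moreover have "y ^ Suc (Suc k) dvd p"
    using orders(2) order_divides[of \<theta> "Suc (Suc k)" p] unfolding y_def by simp
  ultimately have "y ^ Suc k * y dvd y ^ Suc k * (q1 - smult c s1)"
    by (simp only: power_Suc2)
  moreover have "y ^ Suc k \<noteq> 0"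
    by (intro power_not_zero) (simp add: y_def)
  ultimately have "y dvd q1 - smult c s1"
    using dvd_times_left_cancel_iff by blast
  then have "poly q1 \<theta> = c * poly s1 \<theta>"
    by (simp add: y_def poly_eq_0_iff_dvd[symmetric])
  moreover have "poly q1 \<theta> * poly s1 \<theta> \<le> 0"
    using W q s by (intro wronskian_nonneg_cofactor_sign) (simp_all add: y_def)
  ultimately have "c * (poly s1 \<theta>)\<^sup>2 \<le> 0"
    by (simp add: power2_eq_square mult.assoc)
  moreover have "(poly s1 \<theta>)\<^sup>2 > 0"
    using \<open>poly s1 \<theta> \<noteq> 0\<close> by simp
  ultimately show False
    using mult_pos_pos[OF \<open>c > 0\<close>] by fastforce
qed

lemma pendant_order:
  fixes q s :: "real poly"
  assumes "p = [:-a, 1:] * q - smult c s" and "r = [:-a, 1:] * s"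
    and "c > 0" and "q \<noteq> 0" and "s \<noteq> 0"
    and "\<And>x. poly (s * pderiv q - q * pderiv s) x \<ge> 0"
    and "order \<theta> r + 1 = order \<theta> p"
  shows "order \<theta> q + 1 = order \<theta> p"
proof (cases "a = \<theta>")
  case True
  then show ?thesis
    using pendant_order_at_root_impossible[OF assms(1,2)[unfolded True] assms(3-7)] by blast
next
  case False
  then show ?thesis
    using pendant_order_off_root[OF assms(1,2) _ assms(4,5) False assms(7)] \<open>c > 0\<close> by simp
qed

section \<open>Essential vertices\<close>

lemma eta_del_edges:
  assumes "v \<notin> S"
  shows "eta w w1 S (del_edges E v) = eta w w1 S E"
proof -
  have "induced_edges (del_edges E v) T = induced_edges E T" if "T \<subseteq> S" for T
    using that assms by (auto simp: induced_edges_def del_edges_def)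
  then show ?thesis
    unfolding eta_def by (intro sum.cong) auto
qed

lemma essential_iff:
  "essential w w1 \<theta> V E v \<longleftrightarrow>
    v \<in> V \<and> order \<theta> (eta w w1 (V - {v}) E) + 1 = order \<theta> (eta w w1 V E)"
  by (auto simp: essential_def mult_def del_vertices_def eta_del_edges)

lemma unique_neighbour:
  assumes edges: "\<forall>e\<in>E. card e = 2" and "finite E" and "degree E u < 2" and "{u, v} \<in> E"
  shows "{u, x} \<in> E \<longleftrightarrow> x = v"
proof
  assume "{u, x} \<in> E"
  have "finite {e\<in>E. u \<in> e}" and "card {e\<in>E. u \<in> e} \<le> 1"
    using assms(2,3) by (auto simp: degree_def)
  then have "{u, x} = {u, v}"
    using \<open>{u, x} \<in> E\<close> assms(4) by (auto simp: card_le_Suc0_iff_eq)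
  moreover have "u \<noteq> v"
    using doubleton_edge_neq[OF edges assms(4)] .
  ultimately show "x = v"
    by (auto simp: doubleton_eq_iff)
qed (use assms(4) in simp)

lemma essential_pendant_vertex:
  assumes edges: "\<forall>e\<in>E. card e = 2" and "finite V" and "w {u, v} \<noteq> 0" and "u \<in> V"
    and nbr: "\<And>x. {u, x} \<in> E \<longleftrightarrow> x = v"
    and v_essential: "essential w w1 \<theta> V E v"
  shows "essential w w1 \<theta> V E u"
proof -
  define V' where "V' = V - {u}"
  have "v \<in> V"
    using v_essential by (simp add: essential_iff)
  moreover have "u \<noteq> v"
    using doubleton_edge_neq[OF edges] nbr[of v] by simp
  ultimately have V: "V = insert u V'" "V - {v} = insert u (V' - {v})" "V' = insert v (V' - {v})"
    and N: "{x\<in>V'. {u, x} \<in> E} = {v}" "{x\<in>V' - {v}. {u, x} \<in> E} = {}"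
    and "u \<notin> V'" "finite V'"
    using \<open>u \<in> V\<close> \<open>finite V\<close> by (auto simp: V'_def nbr)
  have p: "eta w w1 V E = [:- w1 u, 1:] * eta w w1 V' E - smult ((cmod (w {u, v}))\<^sup>2) (eta w w1 (V' - {v}) E)"
    using eta_insert_vertex[OF edges \<open>finite V'\<close> \<open>u \<notin> V'\<close>, unfolded N(1) V(1)[symmetric]] by simp
  have r: "eta w w1 (V - {v}) E = [:- w1 u, 1:] * eta w w1 (V' - {v}) E"
    using eta_insert_vertex[OF edges, of "V' - {v}" u, unfolded N(2) V(2)[symmetric]] \<open>finite V'\<close> \<open>u \<notin> V'\<close>
    by simp
  have c: "(cmod (w {u, v}))\<^sup>2 > 0"
    using assms(3) by simp
  have W: "poly (eta w w1 (V' - {v}) E * pderiv (eta w w1 V' E)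
      - eta w w1 V' E * pderiv (eta w w1 (V' - {v}) E)) x \<ge> 0" for x
    using eta_wronskian_nonneg[OF edges, of "V' - {v}" v, unfolded V(3)[symmetric]] \<open>finite V'\<close> by simp
  have "order \<theta> (eta w w1 (V - {v}) E) + 1 = order \<theta> (eta w w1 V E)"
    using v_essential by (simp add: essential_iff)
  then have "order \<theta> (eta w w1 V' E) + 1 = order \<theta> (eta w w1 V E)"
    using pendant_order[OF p r c _ _ W] eta_nonzero[OF edges] \<open>finite V'\<close> by blast
  then show ?thesis
    using \<open>u \<in> V\<close> by (simp add: essential_iff V'_def)
qed

theorem lemma5p8:
  fixes V :: "'a set" and E :: "'a set set"
    and w :: "'a set \<Rightarrow> complex" and w1 :: "'a \<Rightarrow> real" and \<theta> :: real and u :: 'a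
  assumes "simple_graph V E"
    and "\<forall>e\<in>E. w e \<noteq> 0"
    and "special w w1 \<theta> V E u"
  shows "degree E u \<ge> 2"
proof (rule ccontr)
  assume "\<not> 2 \<le> degree E u"
  have "finite V" and edges: "\<forall>e\<in>E. card e = 2" and "E \<subseteq> Pow V"
    using assms(1) by (auto simp: simple_graph_def)
  then have "finite E"
    by (meson finite_Pow_iff finite_subset)
  obtain v where "u \<in> V" and u_inessential: "\<not> essential w w1 \<theta> V E u"
    and "{u, v} \<in> E" and v_essential: "essential w w1 \<theta> V E v"
    using assms(3) by (auto simp: special_def)
  have nbr: "{u, x} \<in> E \<longleftrightarrow> x = v" for x
    using unique_neighbour[OF edges \<open>finite E\<close> _ \<open>{u, v} \<in> E\<close>] \<open>\<not> 2 \<le> degree E u\<close> by simp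
  have "w {u, v} \<noteq> 0"
    using assms(2) \<open>{u, v} \<in> E\<close> by blast
  then have "essential w w1 \<theta> V E u"
    using essential_pendant_vertex[OF edges \<open>finite V\<close> _ \<open>u \<in> V\<close> nbr v_essential] by blast
  with u_inessential show False ..
qed

end
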